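(* Let $\{\gamma_k\}$ be strictly positive numbers with $\gamma_k\to\infty$, and $\{g_k\}$ probability generating functions. Define $$G_k(z)=k\gamma_k[g_k(e^{-z/k})-e^{-z/k}],\ z\ge0,\qquad \phi_k(z)=k\gamma_k[g_k(1-z/k)-(1-z/k)],\ 0\le z\le k.$$ Then $\{G_k\}$ is uniformly Lipschitz on each bounded interval if and only if $\{\phi_k\}$ is. In this case $\lim_{k\to\infty}|\phi_k(z)-G_k(z)|=0$ uniformly in $z$ on each bounded interval.
   Context: "Uniformly Lipschitz on each bounded interval" means: for each $a\ge0$ there is a constant $L_a$ such that all the functions (for $\phi_k$: all those with $k\ge a$) are $L_a$-Lipschitz on $[0,a]$. *)

theory Defs
  imports "HOL-Probability.Probability"
begin

definition pgf :: "nat pmf \<Rightarrow> real \<Rightarrow> real" where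
  "pgf p s = (\<Sum>j. pmf p j * s ^ j)"

definition G_fun :: "(nat \<Rightarrow> nat pmf) \<Rightarrow> (nat \<Rightarrow> real) \<Rightarrow> nat \<Rightarrow> real \<Rightarrow> real" where
  "G_fun P \<gamma> k z = real k * \<gamma> k * (pgf (P k) (exp (- z / real k)) - exp (- z / real k))"

text \<open>Only meaningful for 0 \<le> z \<le> k.\<close>
definition phi_fun :: "(nat \<Rightarrow> nat pmf) \<Rightarrow> (nat \<Rightarrow> real) \<Rightarrow> nat \<Rightarrow> real \<Rightarrow> real" where
  "phi_fun P \<gamma> k z = real k * \<gamma> k * (pgf (P k) (1 - z / real k) - (1 - z / real k))"

definition unif_lipschitz_G :: "(nat \<Rightarrow> real \<Rightarrow> real) \<Rightarrow> bool" where
  "unif_lipschitz_G F \<longleftrightarrow> (\<forall>a\<ge>0. \<exists>L. \<forall>k. L-lipschitz_on {0..a} (F k))"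

definition unif_lipschitz_phi :: "(nat \<Rightarrow> real \<Rightarrow> real) \<Rightarrow> bool" where
  "unif_lipschitz_phi F \<longleftrightarrow> (\<forall>a\<ge>0. \<exists>L. \<forall>k. real k \<ge> a \<longrightarrow> L-lipschitz_on {0..a} (F k))"

end

theory Submission
  imports Defs
begin

text \<open>
  With \<open>h\<^sub>k(z) = k (1 - exp(-z/k))\<close> and its inverse \<open>u\<^sub>k(w) = -k ln(1 - w/k)\<close> one has
  \<open>G\<^sub>k = \<phi>\<^sub>k \<circ> h\<^sub>k\<close> and \<open>\<phi>\<^sub>k = G\<^sub>k \<circ> u\<^sub>k\<close> on \<open>[0,k)\<close>. Since \<open>h\<^sub>k\<close> is 1-Lipschitz with
  \<open>h\<^sub>k(z) \<le> z\<close>, and \<open>u\<^sub>k\<close> is 2-Lipschitz with \<open>u\<^sub>k(w) \<le> 2w\<close> on \<open>[0,k/2]\<close>, Lipschitz bounds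
  transfer in both directions for all large \<open>k\<close>. On \<open>[k/2,k]\<close>, where \<open>u\<^sub>k\<close> degenerates,
  \<open>\<phi>\<^sub>k\<close> is \<open>2\<gamma>\<^sub>k\<close>-Lipschitz directly because a generating function is 1-Lipschitz on
  \<open>[0,1/2]\<close>; this takes care of the finitely many small \<open>k\<close>. Finally
  \<open>|\<phi>\<^sub>k(z) - G\<^sub>k(z)| = |\<phi>\<^sub>k(z) - \<phi>\<^sub>k(h\<^sub>k z)| \<le> L (z - h\<^sub>k z) \<le> L z\<^sup>2/k\<close>.
\<close>

section \<open>Lipschitz bounds for the two substitutions\<close>

lemma lipschitz_on_if_derivative_bounded:
  fixes f f' :: "real \<Rightarrow> real"
  assumes "convex S"
    and "\<And>x. x \<in> S \<Longrightarrow> (f has_real_derivative f' x) (at x within S)"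
    and "\<And>x. x \<in> S \<Longrightarrow> \<bar>f' x\<bar> \<le> B" and "0 \<le> B"
  shows "B-lipschitz_on S f"
proof (rule lipschitz_onI)
  fix x y assume "x \<in> S" "y \<in> S"
  then show "dist (f x) (f y) \<le> B * dist x y"
    using field_differentiable_bound[OF assms(1,2), of B] assms(3) by (simp add: dist_real_def)
qed fact

definition exp_rescale :: "real \<Rightarrow> real \<Rightarrow> real" where
  "exp_rescale c z = c * (1 - exp (- z / c))"

definition log_rescale :: "real \<Rightarrow> real \<Rightarrow> real" where
  "log_rescale c w = - c * ln (1 - w / c)"

lemma exp_rescale_lipschitz:
  assumes "c > 0"
  shows "1-lipschitz_on {0..} (exp_rescale c)"
proof (rule lipschitz_on_if_derivative_bounded)
  fix z :: real
  show "(exp_rescale c has_real_derivative exp (- z / c)) (at z within {0..})"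
    unfolding exp_rescale_def using assms
    by (auto intro!: derivative_eq_intros simp: field_simps)
  assume "z \<in> {0..}"
  then show "\<bar>exp (- z / c)\<bar> \<le> 1" using assms by simp
qed auto

lemma exp_rescale_bounds:
  assumes "c > 0" "0 \<le> z"
  shows "0 \<le> exp_rescale c z" "exp_rescale c z \<le> z" "exp_rescale c z \<le> c"
proof -
  have "1 - z / c \<le> exp (- z / c)" using exp_ge_add_one_self[of "- z / c"] by simp
  then have "c * (1 - exp (- z / c)) \<le> c * (z / c)" using assms by (intro mult_left_mono) auto
  then show "exp_rescale c z \<le> z" using assms by (simp add: exp_rescale_def)
qed (use assms in \<open>auto simp: exp_rescale_def\<close>)

lemma exp_minus_le_quadratic:
  fixes t :: real
  assumes "0 \<le> t"
  shows "exp (- t) \<le> 1 - t + t\<^sup>2"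
proof -
  have "exp (- t) = 1 / exp t" by (simp add: exp_minus field_simps)
  also have "\<dots> \<le> 1 / (1 + t)"
    using assms exp_ge_add_one_self[of t] by (intro divide_left_mono) auto
  also have "\<dots> \<le> 1 - t + t\<^sup>2"
  proof -
    have "1 \<le> (1 + t) * (1 - t + t\<^sup>2)" using assms by (simp add: algebra_simps power2_eq_square)
    then show ?thesis using assms by (simp add: field_simps)
  qed
  finally show ?thesis .
qed

lemma exp_rescale_approx:
  assumes "c > 0" "0 \<le> z"
  shows "z - exp_rescale c z \<le> z\<^sup>2 / c"
proof -
  have "c * exp (- (z / c)) \<le> c * (1 - z / c + (z / c)\<^sup>2)"
    using assms by (intro mult_left_mono exp_minus_le_quadratic) auto
  also have "\<dots> = c - z + z\<^sup>2 / c" using assms by (simp add: field_simps power2_eq_square)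
  finally show ?thesis by (simp add: exp_rescale_def algebra_simps)
qed

lemma log_rescale_lipschitz:
  assumes "c > 0"
  shows "2-lipschitz_on {0..c/2} (log_rescale c)"
proof (rule lipschitz_on_if_derivative_bounded)
  fix w :: real assume w: "w \<in> {0..c/2}"
  then have "c - w \<ge> c / 2" by simp
  show "(log_rescale c has_real_derivative c / (c - w)) (at w within {0..c/2})"
    unfolding log_rescale_def using assms w by (auto intro!: derivative_eq_intros simp: field_simps)
  show "\<bar>c / (c - w)\<bar> \<le> 2" using assms \<open>c - w \<ge> c / 2\<close> by (simp add: field_simps)
qed auto

lemma log_rescale_bounds:
  assumes "c > 0" "0 \<le> w" "w \<le> c/2"
  shows "0 \<le> log_rescale c w" "log_rescale c w \<le> 2 * w"
proof -
  have "ln (1 - w / c) \<le> 0" using assms by (simp add: field_simps)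
  then show "0 \<le> log_rescale c w" using assms by (simp add: log_rescale_def mult_nonneg_nonpos)
  have "dist (log_rescale c w) (log_rescale c 0) \<le> 2 * dist w 0"
    using lipschitz_onD[OF log_rescale_lipschitz[OF assms(1)], of w 0] assms by simp
  then show "log_rescale c w \<le> 2 * w" using assms by (simp add: log_rescale_def dist_real_def)
qed

section \<open>Lipschitz bound for a probability generating function\<close>

lemma pmf_sums_one: "pmf (p :: nat pmf) sums 1"
  using sums_infsetsum_nat'[OF pmf_abs_summable[of p UNIV]] infsetsum_pmf_eq_1[of p UNIV] by simp

lemma pgf_summable:
  assumes "\<bar>s\<bar> \<le> 1"
  shows "summable (\<lambda>j. pmf p j * s ^ j)"
proof (rule summable_comparison_test[OF _ sums_summable[OF pmf_sums_one]])
  have "\<bar>s ^ n\<bar> \<le> 1" for n using assms by (simp add: power_abs power_le_one)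
  then show "\<exists>N. \<forall>n\<ge>N. norm (pmf p n * s ^ n) \<le> pmf p n"
    by (simp add: abs_mult mult_left_le)
qed

lemma power_diff_le_half:
  fixes s t :: real
  assumes "s \<in> {0..1/2}" "t \<in> {0..1/2}"
  shows "\<bar>s ^ j - t ^ j\<bar> \<le> \<bar>s - t\<bar>"
proof (induction j)
  case (Suc j)
  show ?case
  proof (cases "j = 0")
    case False
    then have "t ^ j \<le> 1/2" using assms power_decreasing[of 1 j t] by auto
    have "\<bar>s * (s ^ j - t ^ j)\<bar> \<le> 1/2 * \<bar>s - t\<bar>"
      using assms Suc.IH unfolding abs_mult by (intro mult_mono) auto
    moreover have "\<bar>t ^ j * (s - t)\<bar> \<le> 1/2 * \<bar>s - t\<bar>"
      using \<open>t ^ j \<le> 1/2\<close> assms unfolding abs_mult by (intro mult_right_mono) auto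
    moreover have "s ^ Suc j - t ^ Suc j = s * (s ^ j - t ^ j) + t ^ j * (s - t)"
      by (simp add: algebra_simps)
    ultimately show ?thesis
      using abs_triangle_ineq[of "s * (s ^ j - t ^ j)" "t ^ j * (s - t)"] by simp
  qed simp
qed simp

lemma pgf_lipschitz_half: "1-lipschitz_on {0..1/2} (pgf p)"
proof (rule lipschitz_onI)
  fix s t :: real assume st: "s \<in> {0..1/2}" "t \<in> {0..1/2}"
  have bound: "\<bar>pmf p j * (s ^ j - t ^ j)\<bar> \<le> pmf p j * \<bar>s - t\<bar>" for j
    using power_diff_le_half[OF st] by (simp add: abs_mult mult_left_mono)
  have weights: "(\<lambda>j. pmf p j * \<bar>s - t\<bar>) sums \<bar>s - t\<bar>"
    using sums_mult2[OF pmf_sums_one] by fastforce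
  have summable_abs: "summable (\<lambda>j. \<bar>pmf p j * (s ^ j - t ^ j)\<bar>)"
    using bound by (intro summable_comparison_test[OF _ sums_summable[OF weights]]) auto
  have "pgf p s - pgf p t = (\<Sum>j. pmf p j * (s ^ j - t ^ j))"
    unfolding pgf_def using st
    by (subst suminf_diff) (auto intro!: pgf_summable simp: right_diff_distrib)
  then have "\<bar>pgf p s - pgf p t\<bar> \<le> (\<Sum>j. \<bar>pmf p j * (s ^ j - t ^ j)\<bar>)"
    using summable_rabs[OF summable_abs] by simp
  also have "\<dots> \<le> \<bar>s - t\<bar>"
    using suminf_le[OF bound summable_abs sums_summable[OF weights]] sums_unique[OF weights] by simp
  finally show "dist (pgf p s) (pgf p t) \<le> 1 * dist s t" by (simp add: dist_real_def)
qed simp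

section \<open>Transferring Lipschitz bounds between \<open>G\<^sub>k\<close> and \<open>\<phi>\<^sub>k\<close>\<close>

lemma G_fun_eq_phi_fun_exp_rescale:
  "k > 0 \<Longrightarrow> G_fun P \<gamma> k z = phi_fun P \<gamma> k (exp_rescale (real k) z)"
  by (simp add: G_fun_def phi_fun_def exp_rescale_def)

lemma phi_fun_eq_G_fun_log_rescale:
  assumes "k > 0" "w < real k"
  shows "phi_fun P \<gamma> k w = G_fun P \<gamma> k (log_rescale (real k) w)"
proof -
  have "1 - w / real k > 0" using assms by (simp add: field_simps)
  then show ?thesis using assms by (simp add: G_fun_def phi_fun_def log_rescale_def)
qed

lemma G_fun_0: "G_fun P \<gamma> 0 = (\<lambda>_. 0)"
  by (simp add: G_fun_def fun_eq_iff)

lemma phi_fun_0: "phi_fun P \<gamma> 0 = (\<lambda>_. 0)"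
  by (simp add: phi_fun_def fun_eq_iff)

lemma lipschitz_G_fun_if_phi_fun:
  assumes k: "k > 0" and L: "L-lipschitz_on {0..b} (phi_fun P \<gamma> k)" and b: "min a (real k) \<le> b"
  shows "L-lipschitz_on {0..a} (G_fun P \<gamma> k)"
proof -
  have "exp_rescale (real k) ` {0..a} \<subseteq> {0..b}"
  proof
    fix w assume "w \<in> exp_rescale (real k) ` {0..a}"
    then obtain z where "z \<in> {0..a}" "w = exp_rescale (real k) z" by blast
    then show "w \<in> {0..b}" using exp_rescale_bounds[of "real k" z] k b by auto
  qed
  moreover have "1-lipschitz_on {0..a} (exp_rescale (real k))"
    using k by (intro lipschitz_on_subset[OF exp_rescale_lipschitz]) auto
  ultimately have "(L * 1)-lipschitz_on {0..a} (\<lambda>z. phi_fun P \<gamma> k (exp_rescale (real k) z))"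
    using L by (blast intro: lipschitz_on_compose2 lipschitz_on_subset)
  then show ?thesis using G_fun_eq_phi_fun_exp_rescale[OF k] by simp
qed

lemma lipschitz_phi_fun_if_G_fun:
  assumes k: "k > 0" and L: "L-lipschitz_on {0..2*b} (G_fun P \<gamma> k)" and b: "b \<le> real k / 2"
  shows "(2 * L)-lipschitz_on {0..b} (phi_fun P \<gamma> k)"
proof -
  have "log_rescale (real k) ` {0..b} \<subseteq> {0..2*b}"
  proof
    fix u assume "u \<in> log_rescale (real k) ` {0..b}"
    then obtain w where "w \<in> {0..b}" "u = log_rescale (real k) w" by blast
    then show "u \<in> {0..2*b}" using log_rescale_bounds[of "real k" w] k b by auto
  qed
  moreover have "2-lipschitz_on {0..b} (log_rescale (real k))"
    using k b by (intro lipschitz_on_subset[OF log_rescale_lipschitz]) auto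
  ultimately have "(L * 2)-lipschitz_on {0..b} (\<lambda>w. G_fun P \<gamma> k (log_rescale (real k) w))"
    using L by (blast intro: lipschitz_on_compose2 lipschitz_on_subset)
  moreover have "phi_fun P \<gamma> k w = G_fun P \<gamma> k (log_rescale (real k) w)" if "w \<in> {0..b}" for w
    using that k b by (intro phi_fun_eq_G_fun_log_rescale) auto
  ultimately have "(L * 2)-lipschitz_on {0..b} (phi_fun P \<gamma> k)"
    by (rule lipschitz_on_transform)
  then show ?thesis by (simp add: mult.commute)
qed

lemma lipschitz_phi_fun_upper_half:
  assumes k: "k > 0" and \<gamma>: "0 \<le> \<gamma> k"
  shows "(2 * \<gamma> k)-lipschitz_on {real k / 2..real k} (phi_fun P \<gamma> k)"
proof -
  define s where "s w = 1 - w / real k" for w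
  have s_lip: "(1 / real k)-lipschitz_on {real k / 2..real k} s"
    using lipschitz_on_diff[OF lipschitz_on_constant lipschitz_on_cmult_real[OF lipschitz_on_id, of "1 / real k"]]
    by (simp add: s_def)
  have "s ` {real k / 2..real k} \<subseteq> {0..1/2}"
    using k by (auto simp: s_def field_simps)
  then have "(1 * (1 / real k))-lipschitz_on {real k / 2..real k} (\<lambda>w. pgf (P k) (s w))"
    using s_lip by (blast intro: lipschitz_on_compose2 lipschitz_on_subset[OF pgf_lipschitz_half])
  from lipschitz_on_diff[OF this s_lip]
  have "(2 / real k)-lipschitz_on {real k / 2..real k} (\<lambda>w. pgf (P k) (s w) - s w)"
    by simp
  from lipschitz_on_cmult_real_nonneg[OF this, of "real k * \<gamma> k"]
  show ?thesis using k \<gamma> by (simp add: phi_fun_def s_def mult.commute)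
qed

lemma lipschitz_phi_fun_on_domain:
  assumes "k > 0" "0 \<le> \<gamma> k" "L-lipschitz_on {0..real k} (G_fun P \<gamma> k)"
  shows "(max (2 * L) (2 * \<gamma> k))-lipschitz_on {0..real k} (phi_fun P \<gamma> k)"
proof -
  have "(2 * L)-lipschitz_on {0..real k / 2} (phi_fun P \<gamma> k)"
    using assms by (intro lipschitz_phi_fun_if_G_fun) auto
  from lipschitz_on_concat_max[OF this lipschitz_phi_fun_upper_half[of k \<gamma> P]]
  show ?thesis using assms by simp
qed

section \<open>Uniformity in \<open>k\<close>\<close>

lemma uniform_lipschitz_if_eventually:
  fixes f :: "nat \<Rightarrow> 'a::metric_space \<Rightarrow> 'b::metric_space"
  assumes each: "\<And>k. k \<in> K \<Longrightarrow> \<exists>L. L-lipschitz_on S (f k)"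
    and eventually: "\<And>k. k \<in> K \<Longrightarrow> N \<le> k \<Longrightarrow> L-lipschitz_on S (f k)"
  shows "\<exists>M. \<forall>k\<in>K. M-lipschitz_on S (f k)"
proof -
  obtain Lf where Lf: "\<And>k. k \<in> K \<Longrightarrow> (Lf k)-lipschitz_on S (f k)"
    using each by metis
  define M where "M = Max (insert L (Lf ` {..<N}))"
  have "M-lipschitz_on S (f k)" if "k \<in> K" for k
  proof (cases "N \<le> k")
    case True
    have "L \<le> M" by (simp add: M_def)
    with eventually[OF that True] show ?thesis by (rule lipschitz_on_le)
  next
    case False
    then have "Lf k \<le> M" by (simp add: M_def)
    with Lf[OF that] show ?thesis by (rule lipschitz_on_le)
  qed
  then show ?thesis by blast
qed

lemma uniform_limit_zero_if_bounded:
  fixes f :: "nat \<Rightarrow> 'a \<Rightarrow> real"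
  assumes "\<And>k z. N \<le> k \<Longrightarrow> z \<in> S \<Longrightarrow> \<bar>f k z\<bar> \<le> b k" and "b \<longlonglongrightarrow> 0"
  shows "uniform_limit S f (\<lambda>_. 0) sequentially"
proof (rule uniform_limitI)
  fix e :: real assume "0 < e"
  with \<open>b \<longlonglongrightarrow> 0\<close> have "\<forall>\<^sub>F k in sequentially. b k < e" by (rule order_tendstoD)
  then show "\<forall>\<^sub>F k in sequentially. \<forall>z\<in>S. dist (f k z) 0 < e"
    using eventually_ge_at_top[of N] by eventually_elim (use assms(1) in fastforce)
qed

lemma unif_lipschitz_G_if_phi:
  assumes phi: "unif_lipschitz_phi (phi_fun P \<gamma>)"
  shows "unif_lipschitz_G (G_fun P \<gamma>)"
  unfolding unif_lipschitz_G_def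
proof (intro allI impI)
  fix a :: real assume "0 \<le> a"
  with phi obtain L where L: "\<And>k. a \<le> real k \<Longrightarrow> L-lipschitz_on {0..a} (phi_fun P \<gamma> k)"
    unfolding unif_lipschitz_phi_def by blast
  have each: "\<exists>L. L-lipschitz_on {0..a} (G_fun P \<gamma> k)" for k
  proof (cases "k = 0")
    case False
    from phi obtain Lk where "\<forall>j. real k \<le> real j \<longrightarrow> Lk-lipschitz_on {0..real k} (phi_fun P \<gamma> j)"
      unfolding unif_lipschitz_phi_def by (meson of_nat_0_le_iff)
    then have "Lk-lipschitz_on {0..a} (G_fun P \<gamma> k)"
      using False by (intro lipschitz_G_fun_if_phi_fun[of k Lk "real k"]) auto
    then show ?thesis ..
  next
    case True
    then show ?thesis using lipschitz_on_constant[of _ 0] by (auto simp: G_fun_0)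
  qed
  have "L-lipschitz_on {0..a} (G_fun P \<gamma> k)" if "nat \<lceil>a\<rceil> + 1 \<le> k" for k
  proof -
    have "a \<le> real k" "k > 0" using that by linarith+
    then show ?thesis using L by (intro lipschitz_G_fun_if_phi_fun[of k L a]) auto
  qed
  with each have "\<exists>M. \<forall>k\<in>UNIV. M-lipschitz_on {0..a} (G_fun P \<gamma> k)"
    by (intro uniform_lipschitz_if_eventually)
  then show "\<exists>M. \<forall>k. M-lipschitz_on {0..a} (G_fun P \<gamma> k)" by blast
qed

lemma unif_lipschitz_phi_if_G:
  assumes \<gamma>: "\<And>k. 0 \<le> \<gamma> k" and G: "unif_lipschitz_G (G_fun P \<gamma>)"
  shows "unif_lipschitz_phi (phi_fun P \<gamma>)"
  unfolding unif_lipschitz_phi_def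
proof (intro allI impI)
  fix a :: real assume "0 \<le> a"
  with G obtain L where L: "\<And>k. L-lipschitz_on {0..2*a} (G_fun P \<gamma> k)"
    unfolding unif_lipschitz_G_def by (metis mult_nonneg_nonneg zero_le_numeral)
  have each: "\<exists>L. L-lipschitz_on {0..a} (phi_fun P \<gamma> k)" if "k \<in> {k. a \<le> real k}" for k
  proof (cases "k = 0")
    case False
    from G obtain Lk where "Lk-lipschitz_on {0..real k} (G_fun P \<gamma> k)"
      unfolding unif_lipschitz_G_def by (meson of_nat_0_le_iff)
    with False \<gamma> have "(max (2 * Lk) (2 * \<gamma> k))-lipschitz_on {0..real k} (phi_fun P \<gamma> k)"
      by (intro lipschitz_phi_fun_on_domain) auto
    moreover have "{0..a} \<subseteq> {0..real k}" using that by auto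
    ultimately show ?thesis by (blast intro: lipschitz_on_subset)
  next
    case True
    then show ?thesis using lipschitz_on_constant[of _ 0] by (auto simp: phi_fun_0)
  qed
  have "(2 * L)-lipschitz_on {0..a} (phi_fun P \<gamma> k)" if "nat \<lceil>2 * a\<rceil> + 1 \<le> k" for k
  proof -
    have "a \<le> real k / 2" "k > 0" using that by linarith+
    then show ?thesis using L by (intro lipschitz_phi_fun_if_G_fun) auto
  qed
  with each have "\<exists>M. \<forall>k\<in>{k. a \<le> real k}. M-lipschitz_on {0..a} (phi_fun P \<gamma> k)"
    by (intro uniform_lipschitz_if_eventually)
  then show "\<exists>M. \<forall>k. a \<le> real k \<longrightarrow> M-lipschitz_on {0..a} (phi_fun P \<gamma> k)" by blast
qed

lemma phi_fun_G_fun_uniform_limit: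
  assumes phi: "unif_lipschitz_phi (phi_fun P \<gamma>)" and "0 \<le> a"
  shows "uniform_limit {0..a} (\<lambda>k z. \<bar>phi_fun P \<gamma> k z - G_fun P \<gamma> k z\<bar>) (\<lambda>_. 0) sequentially"
proof -
  from phi \<open>0 \<le> a\<close> obtain L where L: "\<And>k. a \<le> real k \<Longrightarrow> L-lipschitz_on {0..a} (phi_fun P \<gamma> k)"
    unfolding unif_lipschitz_phi_def by blast
  have bound: "\<bar>\<bar>phi_fun P \<gamma> k z - G_fun P \<gamma> k z\<bar>\<bar> \<le> L * a\<^sup>2 / real k"
    if "nat \<lceil>a\<rceil> + 1 \<le> k" and z: "z \<in> {0..a}" for k z
  proof -
    from that(1) have k: "a \<le> real k" "k > 0" by linarith+
    define h where "h = exp_rescale (real k) z"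
    have h: "h \<in> {0..a}" "\<bar>z - h\<bar> \<le> z\<^sup>2 / real k"
      using exp_rescale_bounds[of "real k" z] exp_rescale_approx[of "real k" z] k z
      by (auto simp: h_def)
    have "\<bar>phi_fun P \<gamma> k z - G_fun P \<gamma> k z\<bar> = \<bar>phi_fun P \<gamma> k z - phi_fun P \<gamma> k h\<bar>"
      using G_fun_eq_phi_fun_exp_rescale[OF k(2)] by (simp add: h_def)
    also have "\<dots> \<le> L * \<bar>z - h\<bar>"
      using lipschitz_onD[OF L[OF k(1)] z h(1)] by (simp add: dist_real_def)
    also have "\<dots> \<le> L * (a\<^sup>2 / real k)"
    proof (rule mult_left_mono)
      have "z\<^sup>2 / real k \<le> a\<^sup>2 / real k" using z by (intro divide_right_mono power_mono) auto
      with h(2) show "\<bar>z - h\<bar> \<le> a\<^sup>2 / real k" by linarith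
    qed (rule lipschitz_on_nonneg[OF L[OF k(1)]])
    finally show ?thesis by simp
  qed
  from bound lim_const_over_n show ?thesis by (rule uniform_limit_zero_if_bounded)
qed

theorem proposition2p1p1:
  fixes P :: "nat \<Rightarrow> nat pmf" and \<gamma> :: "nat \<Rightarrow> real"
  assumes pos: "\<And>k. \<gamma> k > 0"
    and lim: "filterlim \<gamma> at_top sequentially"
  shows "(unif_lipschitz_G (G_fun P \<gamma>) \<longleftrightarrow> unif_lipschitz_phi (phi_fun P \<gamma>))
    \<and> (unif_lipschitz_G (G_fun P \<gamma>) \<longrightarrow>
        (\<forall>a\<ge>0. uniform_limit {0..a} (\<lambda>k z. \<bar>phi_fun P \<gamma> k z - G_fun P \<gamma> k z\<bar>) (\<lambda>_. 0) sequentially))"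
proof -
  have "\<And>k. 0 \<le> \<gamma> k" using pos by (simp add: less_imp_le)
  then have "unif_lipschitz_G (G_fun P \<gamma>) \<longleftrightarrow> unif_lipschitz_phi (phi_fun P \<gamma>)"
    using unif_lipschitz_phi_if_G unif_lipschitz_G_if_phi by blast
  then show ?thesis using phi_fun_G_fun_uniform_limit by blast
qed

end
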